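(* Let $\mathbb F_q$ be a finite field with $q$ elements, let $n\ge 2$, let $a_1,\dots,a_n,b\in\mathbb F_q^*$ and let $k,k_1,\dots,k_n,m_1,\dots,m_n$ be positive integers. Let $N_q$ be the number of solutions $(x_1,\dots,x_n)\in\mathbb F_q^n$ of $$(a_1x_1^{m_1}+\dots+a_nx_n^{m_n})^k=bx_1^{k_1}\cdots x_n^{k_n},$$ let $N_q(0)$ and $N_q^*(0)$ be the numbers of solutions of $a_1x_1^{m_1}+\dots+a_nx_n^{m_n}=0$ in $\mathbb F_q^n$ and in $(\mathbb F_q^* )^n$ respectively, and let $k_0=\gcd(k,k_1,\dots,k_n,q-1)$. If $b$ is not a $k_0$th power in $\mathbb F_q$, then $N_q=N_q(0)-N_q^*(0)$. If $b$ is a $k_0$th power in $\mathbb F_q$, then $$N_q=k_0(q-1)^{n-1}+N_q(0)-\frac{k_0+q-1}{q-1}\,N_q^*(0)+\sum_{\psi^{k_0}\ne\varepsilon}\psi(b)T(\psi),$$ where the sum is over all multiplicative characters $\psi$ of $\mathbb F_q$ whose order does not divide $k_0$.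
   Context: $\varepsilon$ denotes the trivial multiplicative character of $\mathbb F_q$. A multiplicative character $\psi$ is extended to $\mathbb F_q$ by $\psi(0)=1$ if $\psi$ is trivial and $\psi(0)=0$ otherwise. For a multiplicative character $\psi$, $$T(\psi)=\frac1{q-1}\sum_{\substack{x_1,\dots,x_n\in\mathbb F_q^*\\ a_1x_1^{m_1}+\dots+a_nx_n^{m_n}\ne0}}\psi^{k_1}(x_1)\cdots\psi^{k_n}(x_n)\,\bar\psi^{k}(a_1x_1^{m_1}+\dots+a_nx_n^{m_n}).$$ *)

theory Defs
  imports Complex_Main "HOL-Library.FuncSet"
begin

text \<open>Multiplicative characters of a finite field, extended to 0 by the convention
  psi(0) = 1 if psi is trivial and psi(0) = 0 otherwise.\<close>
definition mult_char :: "('a::field \<Rightarrow> complex) \<Rightarrow> bool" where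
  "mult_char \<psi> \<longleftrightarrow>
     (\<forall>x y. x \<noteq> 0 \<longrightarrow> y \<noteq> 0 \<longrightarrow> \<psi> (x * y) = \<psi> x * \<psi> y) \<and>
     (\<forall>x. x \<noteq> 0 \<longrightarrow> \<psi> x \<noteq> 0) \<and>
     \<psi> 0 = (if (\<forall>x. x \<noteq> 0 \<longrightarrow> \<psi> x = 1) then 1 else 0)"

text \<open>The diagonal form a_1 x_1^{m_1} + ... + a_n x_n^{m_n} (indices 0..n-1).\<close>
definition diag_form :: "nat \<Rightarrow> (nat \<Rightarrow> 'a::field) \<Rightarrow> (nat \<Rightarrow> nat) \<Rightarrow> (nat \<Rightarrow> 'a) \<Rightarrow> 'a" where
  "diag_form n a m x = (\<Sum>i<n. a i * x i ^ m i)"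

definition T_sum :: "nat \<Rightarrow> (nat \<Rightarrow> 'a::{field,finite}) \<Rightarrow> (nat \<Rightarrow> nat) \<Rightarrow> (nat \<Rightarrow> nat) \<Rightarrow> nat
    \<Rightarrow> ('a \<Rightarrow> complex) \<Rightarrow> complex" where
  "T_sum n a m kk k \<psi> =
     (1 / (of_nat (card (UNIV :: 'a set)) - 1)) *
     (\<Sum>x \<in> {x \<in> Pi\<^sub>E {..<n} (\<lambda>_. UNIV - {0}). diag_form n a m x \<noteq> 0}.
        (\<Prod>i<n. \<psi> (x i) ^ kk i) * cnj (\<psi> (diag_form n a m x)) ^ k)"

end

theory Submission
  imports Defs "HOL-Algebra.Algebraic_Closure_Type"
begin

text \<open>
  If some coordinate of a solution vanishes, the right-hand side is 0, so these solutions are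
  the zeros of the diagonal form \<open>D\<close> with a vanishing coordinate: there are \<open>N0 - N0s\<close> of them.
  On the torus \<open>(F\<^sup>*)\<^sup>n\<close> the equation says \<open>u(x) = b \<Prod> x_i^k_i / D(x)^k = 1\<close>. As \<open>k0\<close>
  divides \<open>k\<close> and every \<open>k_i\<close>, this exhibits \<open>b\<close> as a \<open>k0\<close>-th power, so otherwise the torus
  contributes nothing. In general, \<open>\<psi>(b)\<close> times the summand of \<open>T(\<psi>)\<close> at \<open>x\<close> is \<open>\<psi>(u(x))\<close>,
  so by orthogonality of the \<open>q - 1\<close> characters \<open>\<Sum>\<^sub>\<psi> \<psi>(b) T(\<psi>)\<close> counts the solutions on the
  torus. If \<open>b\<close> is a \<open>k0\<close>-th power, each of the \<open>k0\<close> characters with \<open>\<psi>^k0 = \<epsilon>\<close> is trivial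
  on \<open>b\<close> and on every summand of \<open>T(\<psi>)\<close>, contributing \<open>((q - 1)^n - N0s) / (q - 1)\<close>; the
  remaining characters give the stated formula. Characters are parametrised by their value at
  a generator of the cyclic group \<open>F\<^sup>*\<close>, a \<open>(q - 1)\<close>-th root of unity.
\<close>

section \<open>The multiplicative group of a finite field\<close>

lemma power_mod_of_power_eq_1:
  fixes z :: "'b::monoid_mult"
  assumes "z ^ Q = 1"
  shows "z ^ i = z ^ (i mod Q)"
proof -
  have "z ^ i = (z ^ Q) ^ (i div Q) * z ^ (i mod Q)"
    by (simp flip: power_mult power_add)
  then show ?thesis using assms by simp
qed

lemma nat_pow_ring_of_type_algebra:
  "x [^]\<^bsub>ring_of_type_algebra\<^esub> (n::nat) = (x::'a::field) ^ n"
  by (induction n) (simp_all add: ring_of_type_algebra_def)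

lemma card_UNIV_field_ge_2: "2 \<le> card (UNIV :: 'a::{field,finite} set)"
  using card_mono[of UNIV "{0, 1::'a}"] by simp

lemma field_power_card_minus_one:
  fixes x :: "'a::{field,finite}"
  assumes "x \<noteq> 0"
  shows "x ^ (card (UNIV :: 'a set) - 1) = 1"
proof -
  interpret field "ring_of_type_algebra :: 'a ring" ..
  have fin: "finite (carrier (ring_of_type_algebra :: 'a ring))" by simp
  \<comment> \<open>Qualified names: \<open>Ring_Divisibility\<close> redeclares \<open>mult_of\<close> and its simplification rules.\<close>
  note group.pow_order_eq_1[OF field_mult_group, of x,
      unfolded Multiplicative_Group.nat_pow_mult_of order_mult_of[OF fin]]
  then show ?thesis
    using assms
    by (simp add: nat_pow_ring_of_type_algebra Coset.order_def) (simp add: ring_of_type_algebra_def)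
qed

lemma finite_field_cyclic:
  obtains g :: "'a::{field,finite}" where "UNIV - {0} = range ((^) g)"
proof -
  interpret field "ring_of_type_algebra :: 'a ring" ..
  have "finite (carrier (ring_of_type_algebra :: 'a ring))" by simp
  note finite_field_mult_group_has_gen[OF this, unfolded Multiplicative_Group.carrier_mult_of]
  then obtain g :: 'a where "carrier ring_of_type_algebra - {\<zero>\<^bsub>ring_of_type_algebra\<^esub>}
      = {g [^]\<^bsub>ring_of_type_algebra\<^esub> i | i::nat. i \<in> UNIV}"
    by (elim bexE)
  then have "UNIV - {0} = range ((^) g)"
    unfolding nat_pow_ring_of_type_algebra by (simp add: ring_of_type_algebra_def full_SetCompr_eq)
  then show thesis ..
qed

definition prim_elem :: "'a::{field,finite}" where
  "prim_elem = (SOME g. UNIV - {0} = range ((^) g))"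

lemma range_power_prim_elem: "range ((^) prim_elem) = UNIV - {0 :: 'a::{field,finite}}"
proof -
  obtain g :: 'a where "UNIV - {0} = range ((^) g)" by (rule finite_field_cyclic)
  then show ?thesis
    unfolding prim_elem_def by (metis (mono_tags, lifting) someI_ex)
qed

lemma prim_elem_nonzero: "prim_elem \<noteq> (0 :: 'a::{field,finite})"
proof -
  have "prim_elem ^ 1 \<in> range ((^) (prim_elem :: 'a))" by (rule rangeI)
  then show ?thesis unfolding range_power_prim_elem by simp
qed

lemma power_prim_elem_eq_iff:
  fixes i j :: nat
  defines "Q \<equiv> card (UNIV :: 'a::{field,finite} set) - 1"
  shows "(prim_elem :: 'a) ^ i = prim_elem ^ j \<longleftrightarrow> i mod Q = j mod Q"
proof -
  have power_mod: "(prim_elem :: 'a) ^ i = prim_elem ^ (i mod Q)" for i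
    using power_mod_of_power_eq_1 field_power_card_minus_one[OF prim_elem_nonzero]
    unfolding Q_def by blast
  have "Q > 0" unfolding Q_def using card_UNIV_field_ge_2[where 'a='a] by simp
  have "(\<lambda>i. (prim_elem :: 'a) ^ i) ` {..<Q} = range ((^) prim_elem)"
  proof
    show "range ((^) (prim_elem :: 'a)) \<subseteq> (\<lambda>i. prim_elem ^ i) ` {..<Q}"
    proof (rule image_subsetI)
      fix i
      have "i mod Q \<in> {..<Q}" using \<open>Q > 0\<close> by simp
      then show "prim_elem ^ i \<in> (\<lambda>i. (prim_elem :: 'a) ^ i) ` {..<Q}"
        unfolding power_mod[of i] by (rule imageI)
    qed
  qed auto
  then have "inj_on (\<lambda>i. (prim_elem :: 'a) ^ i) {..<Q}"
    by (intro eq_card_imp_inj_on) (simp_all add: range_power_prim_elem card_Diff_singleton Q_def)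
  then show ?thesis
    using \<open>Q > 0\<close> power_mod[of i] power_mod[of j] by (auto dest: inj_onD)
qed

definition dlog :: "'a::{field,finite} \<Rightarrow> nat" where
  "dlog x = (LEAST i. prim_elem ^ i = x)"

lemma prim_elem_power_dlog: "x \<noteq> 0 \<Longrightarrow> prim_elem ^ dlog x = (x :: 'a::{field,finite})"
  unfolding dlog_def using range_power_prim_elem[where 'a='a]
  by (metis (mono_tags, lifting) DiffI LeastI UNIV_I empty_iff insert_iff rangeE)

lemma dlog_mult:
  fixes x y :: "'a::{field,finite}"
  assumes "x \<noteq> 0" "y \<noteq> 0"
  shows "dlog (x * y) mod (card (UNIV :: 'a set) - 1) = (dlog x + dlog y) mod (card (UNIV :: 'a set) - 1)"
proof -
  have "prim_elem ^ dlog (x * y) = (prim_elem :: 'a) ^ (dlog x + dlog y)"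
    using assms by (simp add: power_add prim_elem_power_dlog)
  then show ?thesis
    unfolding power_prim_elem_eq_iff .
qed

lemma dlog_mod_eq_0_iff:
  fixes x :: "'a::{field,finite}"
  assumes "x \<noteq> 0"
  shows "dlog x mod (card (UNIV :: 'a set) - 1) = 0 \<longleftrightarrow> x = 1"
  using power_prim_elem_eq_iff[of "dlog x" 0, where 'a='a]
  unfolding prim_elem_power_dlog[OF assms] by simp

section \<open>Multiplicative characters\<close>

lemma mult_char_mult: "mult_char \<psi> \<Longrightarrow> x \<noteq> 0 \<Longrightarrow> y \<noteq> 0 \<Longrightarrow> \<psi> (x * y) = \<psi> x * \<psi> y"
  unfolding mult_char_def by blast

lemma mult_char_nonzero: "mult_char \<psi> \<Longrightarrow> x \<noteq> 0 \<Longrightarrow> \<psi> x \<noteq> 0"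
  unfolding mult_char_def by blast

lemma mult_char_one: "mult_char \<psi> \<Longrightarrow> \<psi> 1 = 1"
  using mult_char_mult[of \<psi> 1 1] mult_char_nonzero[of \<psi> 1] by simp

lemma mult_char_power: "mult_char \<psi> \<Longrightarrow> x \<noteq> 0 \<Longrightarrow> \<psi> (x ^ j) = \<psi> x ^ j"
  by (induction j) (simp_all add: mult_char_one mult_char_mult)

lemma mult_char_prod:
  assumes "mult_char \<psi>" "\<forall>i\<in>I. f i \<noteq> 0"
  shows "\<psi> (\<Prod>i\<in>I. f i) = (\<Prod>i\<in>I. \<psi> (f i))"
  using assms(2)
  by (induction I rule: infinite_finite_induct)
     (simp_all add: assms(1) mult_char_one mult_char_mult)

lemma mult_char_inverse:
  assumes "mult_char \<psi>" "x \<noteq> 0"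
  shows "\<psi> (inverse x) = inverse (\<psi> x)"
  using mult_char_mult[OF assms(1), of x "inverse x"] assms
  by (simp add: mult_char_one inverse_unique)

lemma mult_char_power_card:
  fixes x :: "'a::{field,finite}"
  assumes "mult_char \<psi>" "x \<noteq> 0"
  shows "\<psi> x ^ (card (UNIV :: 'a set) - 1) = 1"
  using mult_char_power[OF assms, of "card (UNIV :: 'a set) - 1"] mult_char_one[OF assms(1)]
  unfolding field_power_card_minus_one[OF assms(2)] by simp

lemma cnj_mult_char:
  fixes x :: "'a::{field,finite}"
  assumes "mult_char \<psi>" "x \<noteq> 0"
  shows "cnj (\<psi> x) = \<psi> (inverse x)"
proof -
  have "norm (\<psi> x) = 1"
    using power_eq_1_iff[OF mult_char_power_card[OF assms]] card_UNIV_field_ge_2[where 'a='a]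
    by auto
  then have "\<psi> x * cnj (\<psi> x) = 1"
    by (metis complex_norm_square of_real_1 power_one)
  then show ?thesis
    by (simp add: mult_char_inverse[OF assms] inverse_unique)
qed

lemma mult_char_eqI:
  assumes "mult_char \<psi>" "mult_char \<phi>" "\<And>x. x \<noteq> 0 \<Longrightarrow> \<psi> x = \<phi> x"
  shows "\<psi> = \<phi>"
proof
  fix x
  have "(\<forall>x. x \<noteq> 0 \<longrightarrow> \<psi> x = 1) \<longleftrightarrow> (\<forall>x. x \<noteq> 0 \<longrightarrow> \<phi> x = 1)"
    using assms(3) by auto
  then show "\<psi> x = \<phi> x"
    using assms unfolding mult_char_def by (cases "x = 0") auto
qed

definition char_of_root :: "complex \<Rightarrow> 'a::{field,finite} \<Rightarrow> complex" where
  "char_of_root z x = (if x = 0 then (if z = 1 then 1 else 0) else z ^ dlog x)"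

lemma char_of_root_prim_elem:
  assumes "z ^ (card (UNIV :: 'a::{field,finite} set) - 1) = 1"
  shows "char_of_root z (prim_elem :: 'a) = z"
proof -
  have "(prim_elem :: 'a) ^ dlog (prim_elem :: 'a) = prim_elem ^ 1"
    using prim_elem_power_dlog[OF prim_elem_nonzero, where 'a='a] by simp
  then have "dlog (prim_elem :: 'a) mod (card (UNIV :: 'a set) - 1) = 1 mod (card (UNIV :: 'a set) - 1)"
    unfolding power_prim_elem_eq_iff .
  then show ?thesis
    using power_mod_of_power_eq_1[OF assms] prim_elem_nonzero[where 'a='a]
    by (metis char_of_root_def power_one_right)
qed

lemma mult_char_char_of_root:
  assumes "z ^ (card (UNIV :: 'a::{field,finite} set) - 1) = 1"
  shows "mult_char (char_of_root z :: 'a \<Rightarrow> complex)"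
  unfolding mult_char_def
proof (intro conjI allI impI)
  fix x y :: 'a
  assume "x \<noteq> 0" "y \<noteq> 0"
  have "z ^ dlog (x * y) = z ^ (dlog (x * y) mod (card (UNIV :: 'a set) - 1))"
    by (rule power_mod_of_power_eq_1[OF assms])
  also have "\<dots> = z ^ ((dlog x + dlog y) mod (card (UNIV :: 'a set) - 1))"
    by (simp only: dlog_mult[OF \<open>x \<noteq> 0\<close> \<open>y \<noteq> 0\<close>])
  also have "\<dots> = z ^ (dlog x + dlog y)"
    by (rule power_mod_of_power_eq_1[OF assms, symmetric])
  finally show "char_of_root z (x * y) = char_of_root z x * char_of_root z y"
    using \<open>x \<noteq> 0\<close> \<open>y \<noteq> 0\<close> by (simp add: char_of_root_def power_add)
next
  fix x :: 'a
  assume "x \<noteq> 0"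
  have "z \<noteq> 0"
  proof
    assume "z = 0"
    moreover have "card (UNIV :: 'a set) - 1 \<noteq> 0"
      using card_UNIV_field_ge_2[where 'a='a] by simp
    ultimately show False
      using assms by (simp add: power_0_left)
  qed
  then show "char_of_root z x \<noteq> 0"
    using \<open>x \<noteq> 0\<close> by (simp add: char_of_root_def)
next
  have "(\<forall>x::'a. x \<noteq> 0 \<longrightarrow> char_of_root z x = 1) \<longleftrightarrow> z = 1"
    using char_of_root_prim_elem[OF assms] prim_elem_nonzero[where 'a='a]
    by (auto simp: char_of_root_def)
  then show "char_of_root z 0 = (if \<forall>x::'a. x \<noteq> 0 \<longrightarrow> char_of_root z x = 1 then 1 else 0)"
    by (simp add: char_of_root_def)
qed

lemma mult_char_eq_char_of_root:
  fixes \<psi> :: "'a::{field,finite} \<Rightarrow> complex"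
  assumes "mult_char \<psi>"
  shows "\<psi> = char_of_root (\<psi> prim_elem)"
proof (rule mult_char_eqI[OF assms mult_char_char_of_root])
  show "\<psi> prim_elem ^ (card (UNIV :: 'a set) - 1) = 1"
    by (rule mult_char_power_card[OF assms prim_elem_nonzero])
  fix x :: 'a
  assume "x \<noteq> 0"
  then show "\<psi> x = char_of_root (\<psi> prim_elem) x"
    using mult_char_power[OF assms prim_elem_nonzero, of "dlog x"]
    by (simp add: char_of_root_def prim_elem_power_dlog)
qed

lemma bij_betw_char_of_root:
  fixes d :: nat
  assumes "d dvd card (UNIV :: 'a::{field,finite} set) - 1"
  shows "bij_betw char_of_root {z. z ^ d = 1}
           {\<psi> :: 'a \<Rightarrow> complex. mult_char \<psi> \<and> (\<forall>x. x \<noteq> 0 \<longrightarrow> \<psi> x ^ d = 1)}"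
proof -
  obtain c where c: "card (UNIV :: 'a set) - 1 = d * c" using assms ..
  have root: "z ^ (card (UNIV :: 'a set) - 1) = 1" if "z ^ d = 1" for z :: complex
    unfolding c power_mult that by simp
  show ?thesis
  proof (rule bij_betwI')
    fix z w :: complex
    assume "z \<in> {z. z ^ d = 1}" "w \<in> {z. z ^ d = 1}"
    then have "char_of_root z (prim_elem :: 'a) = z" "char_of_root w (prim_elem :: 'a) = w"
      by (auto intro: char_of_root_prim_elem root)
    then show "(char_of_root z = (char_of_root w :: 'a \<Rightarrow> complex)) = (z = w)"
      by metis
  next
    fix z :: complex
    assume "z \<in> {z. z ^ d = 1}"
    then have "z ^ d = 1" by simp
    have "char_of_root z x ^ d = 1" if "x \<noteq> 0" for x :: 'a
    proof -
      have "char_of_root z x ^ d = (z ^ d) ^ dlog x"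
        using that by (simp only: char_of_root_def if_False power_mult[symmetric] mult.commute)
      then show ?thesis using \<open>z ^ d = 1\<close> by simp
    qed
    with mult_char_char_of_root[OF root[OF \<open>z ^ d = 1\<close>]]
    show "char_of_root z \<in> {\<psi> :: 'a \<Rightarrow> complex. mult_char \<psi> \<and> (\<forall>x. x \<noteq> 0 \<longrightarrow> \<psi> x ^ d = 1)}"
      by simp
  next
    fix \<psi> :: "'a \<Rightarrow> complex"
    assume "\<psi> \<in> {\<psi>. mult_char \<psi> \<and> (\<forall>x. x \<noteq> 0 \<longrightarrow> \<psi> x ^ d = 1)}"
    then have "\<psi> prim_elem \<in> {z. z ^ d = 1}" "\<psi> = char_of_root (\<psi> prim_elem)"
      using prim_elem_nonzero mult_char_eq_char_of_root by auto
    then show "\<exists>z\<in>{z. z ^ d = 1}. \<psi> = char_of_root z" ..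
  qed
qed

lemma bij_betw_char_of_root_mult_chars:
  "bij_betw char_of_root {z. z ^ (card (UNIV :: 'a set) - 1) = 1}
     {\<psi> :: 'a::{field,finite} \<Rightarrow> complex. mult_char \<psi>}"
proof -
  have "{\<psi> :: 'a \<Rightarrow> complex. mult_char \<psi>}
      = {\<psi>. mult_char \<psi> \<and> (\<forall>x. x \<noteq> 0 \<longrightarrow> \<psi> x ^ (card (UNIV :: 'a set) - 1) = 1)}"
    using mult_char_power_card by blast
  then show ?thesis
    using bij_betw_char_of_root[OF dvd_refl] by simp
qed

lemma finite_mult_chars: "finite {\<psi> :: 'a::{field,finite} \<Rightarrow> complex. mult_char \<psi>}"
proof -
  have "finite {z :: complex. z ^ (card (UNIV :: 'a set) - 1) = 1}"
    using card_UNIV_field_ge_2[where 'a='a] by (intro finite_roots_unity) simp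
  then show ?thesis
    using bij_betw_finite[OF bij_betw_char_of_root_mult_chars] by blast
qed

lemma card_mult_chars_power_trivial:
  assumes "d > 0" "d dvd card (UNIV :: 'a::{field,finite} set) - 1"
  shows "card {\<psi> :: 'a \<Rightarrow> complex. mult_char \<psi> \<and> (\<forall>x. x \<noteq> 0 \<longrightarrow> \<psi> x ^ d = 1)} = d"
  using bij_betw_same_card[OF bij_betw_char_of_root[OF assms(2)]] card_roots_unity_eq[OF assms(1)]
  by simp

lemma sum_roots_unity_power:
  assumes "Q > 0"
  shows "(\<Sum>z | z ^ Q = 1. (z :: complex) ^ j) = (if Q dvd j then of_nat Q else 0)"
proof (cases "Q dvd j")
  case True
  then have "(z :: complex) ^ j = 1" if "z ^ Q = 1" for z
    using that by (auto simp: power_mult)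
  then show ?thesis
    using True card_roots_unity_eq[OF assms] by simp
next
  case False
  define \<omega> where "\<omega> = cis (2 * pi / real Q)"
  have \<omega>_power: "\<omega> ^ i = cis (2 * pi * real i / real Q)" for i
    unfolding \<omega>_def by (simp add: DeMoivre mult_ac)
  have "\<omega> ^ Q = 1"
    unfolding \<omega>_power using assms by simp
  have "cis (2 * pi * real (j mod Q) / real Q) \<noteq> cis (2 * pi * real 0 / real Q)"
    using inj_onD[OF bij_betw_imp_inj_on[OF bij_betw_roots_unity[OF assms]], of "j mod Q" 0]
      False assms by auto
  then have "\<omega> ^ j \<noteq> 1"
    using power_mod_of_power_eq_1[OF \<open>\<omega> ^ Q = 1\<close>, of j] by (simp add: \<omega>_power)
  have "bij_betw (\<lambda>z. \<omega> * z) {z. z ^ Q = 1} {z. z ^ Q = 1}"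
    by (rule bij_betwI[where g = "\<lambda>z. z / \<omega>"])
       (use \<open>\<omega> ^ Q = 1\<close> in \<open>auto simp: power_mult_distrib power_divide \<omega>_def\<close>)
  then have "(\<Sum>z | z ^ Q = 1. z ^ j) = (\<Sum>z | z ^ Q = 1. (\<omega> * z) ^ j)"
    using sum.reindex_bij_betw[of _ _ _ "\<lambda>z. z ^ j"] by metis
  also have "\<dots> = \<omega> ^ j * (\<Sum>z | z ^ Q = 1. z ^ j)"
    by (simp add: power_mult_distrib sum_distrib_left)
  finally show ?thesis
    using \<open>\<omega> ^ j \<noteq> 1\<close> False by (simp add: algebra_simps)
qed

lemma sum_mult_chars:
  fixes u :: "'a::{field,finite}"
  assumes "u \<noteq> 0"
  shows "(\<Sum>\<psi> | mult_char \<psi>. \<psi> u) = (if u = 1 then of_nat (card (UNIV :: 'a set)) - 1 else 0)"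
proof -
  let ?Q = "card (UNIV :: 'a set) - 1"
  have "(\<Sum>\<psi> | mult_char \<psi>. \<psi> u) = (\<Sum>z | z ^ ?Q = 1. char_of_root z u)"
    using sum.reindex_bij_betw[OF bij_betw_char_of_root_mult_chars, of "\<lambda>\<psi>. \<psi> u"] by simp
  also have "\<dots> = (\<Sum>z | z ^ ?Q = 1. z ^ dlog u)"
    using assms by (simp add: char_of_root_def)
  also have "\<dots> = (if u = 1 then of_nat ?Q else 0)"
    using sum_roots_unity_power[of ?Q "dlog u"] card_UNIV_field_ge_2[where 'a='a]
      dlog_mod_eq_0_iff[OF assms] by (simp add: dvd_eq_mod_eq_0)
  finally show ?thesis
    using card_UNIV_field_ge_2[where 'a='a] by simp
qed

section \<open>Counting the solutions\<close>

lemma card_solutions_split: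
  fixes D :: "(nat \<Rightarrow> 'a::{field,finite}) \<Rightarrow> 'a"
  assumes "k > 0" "\<forall>i<n. kk i > 0"
  shows "int (card {x \<in> Pi\<^sub>E {..<n} (\<lambda>_. UNIV). D x ^ k = b * (\<Prod>i<n. x i ^ kk i)})
       = int (card {x \<in> Pi\<^sub>E {..<n} (\<lambda>_. UNIV). D x = 0})
         - int (card {x \<in> Pi\<^sub>E {..<n} (\<lambda>_. UNIV - {0}). D x = 0})
         + int (card {x \<in> Pi\<^sub>E {..<n} (\<lambda>_. UNIV - {0}). D x ^ k = b * (\<Prod>i<n. x i ^ kk i)})"
proof -
  let ?E = "Pi\<^sub>E {..<n} (\<lambda>_. UNIV :: 'a set)" and ?F = "Pi\<^sub>E {..<n} (\<lambda>_. UNIV - {0 :: 'a})"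
  have "?F \<subseteq> ?E" by (auto simp: PiE_iff)
  have "finite ?E" by (simp add: finite_PiE)
  have split: "card {x \<in> ?E. P x} = card {x \<in> ?F. P x} + card {x \<in> ?E - ?F. P x}" for P
  proof -
    have "{x \<in> ?E. P x} = {x \<in> ?F. P x} \<union> {x \<in> ?E - ?F. P x}"
      using \<open>?F \<subseteq> ?E\<close> by blast
    also have "card \<dots> = card {x \<in> ?F. P x} + card {x \<in> ?E - ?F. P x}"
      using \<open>?F \<subseteq> ?E\<close> by (intro card_Un_disjoint) (auto intro: rev_finite_subset[OF \<open>finite ?E\<close>])
    finally show ?thesis .
  qed
  have "D x ^ k = b * (\<Prod>i<n. x i ^ kk i) \<longleftrightarrow> D x = 0" if "x \<in> ?E - ?F" for x
  proof -
    from that have "\<exists>i<n. x i = 0" by (auto simp: PiE_iff)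
    then obtain i where "i < n" "x i = 0" by blast
    then have "(\<Prod>i<n. x i ^ kk i) = 0"
      using assms(2) by auto
    then show ?thesis
      using assms(1) by (simp only: mult_zero_right power_eq_0_iff) simp
  qed
  then have "{x \<in> ?E - ?F. D x ^ k = b * (\<Prod>i<n. x i ^ kk i)} = {x \<in> ?E - ?F. D x = 0}"
    by blast
  then show ?thesis
    using split[of "\<lambda>x. D x ^ k = b * (\<Prod>i<n. x i ^ kk i)"] split[of "\<lambda>x. D x = 0"] by simp
qed

lemma power_eq_monomial_imp_power:
  fixes b c :: "'a::field" and n :: nat
  assumes "d dvd k" "\<forall>i<n. d dvd kk i" "\<forall>i<n. x i \<noteq> 0"
    and "c ^ k = b * (\<Prod>i<n. x i ^ kk i)"
  shows "\<exists>y. b = y ^ d"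
proof
  have "(\<Prod>i<n. x i ^ kk i) = (\<Prod>i<n. x i ^ (kk i div d)) ^ d"
    using assms(2) by (simp add: prod_power_distrib flip: power_mult)
  moreover have "c ^ k = (c ^ (k div d)) ^ d"
    using assms(1) by (simp flip: power_mult)
  moreover have "(\<Prod>i<n. x i ^ kk i) \<noteq> 0"
    using assms(3) by auto
  ultimately show "b = (c ^ (k div d) / (\<Prod>i<n. x i ^ (kk i div d))) ^ d"
    using assms(4) by (simp add: field_simps)
qed

lemma nonzero_solutions_eq_empty:
  fixes b :: "'a::field" and D :: "(nat \<Rightarrow> 'a) \<Rightarrow> 'a"
  assumes "d dvd k" "\<forall>i<n. d dvd kk i" "\<nexists>y. b = y ^ d"
  shows "{x \<in> Pi\<^sub>E {..<n} (\<lambda>_. UNIV - {0}). D x ^ k = b * (\<Prod>i<n. x i ^ kk i)} = {}"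
proof -
  have "\<not> (\<forall>i<n. x i \<noteq> 0) \<or> D x ^ k \<noteq> b * (\<Prod>i<n. x i ^ kk i)" for x
    using power_eq_monomial_imp_power[OF assms(1,2)] assms(3) by blast
  then show ?thesis
    by (auto simp: PiE_iff)
qed

lemma mult_char_monomial_quotient:
  fixes b c :: "'a::{field,finite}" and n :: nat
  assumes "mult_char \<psi>" "b \<noteq> 0" "c \<noteq> 0" "\<forall>i<n. x i \<noteq> 0"
  shows "\<psi> b * ((\<Prod>i<n. \<psi> (x i) ^ kk i) * cnj (\<psi> c) ^ k)
           = \<psi> (b * (\<Prod>i<n. x i ^ kk i) / c ^ k)"
proof -
  have "\<psi> (\<Prod>i<n. x i ^ kk i) = (\<Prod>i<n. \<psi> (x i) ^ kk i)"
    using assms(4) by (simp add: mult_char_prod[OF assms(1)] mult_char_power[OF assms(1)])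
  moreover have "\<psi> (inverse (c ^ k)) = cnj (\<psi> c) ^ k"
    using assms(3)
    by (simp add: cnj_mult_char[OF assms(1)] mult_char_power[OF assms(1)] flip: power_inverse)
  moreover have "(\<Prod>i<n. x i ^ kk i) \<noteq> 0"
    using assms(4) by simp
  ultimately show ?thesis
    using assms(2,3) by (simp add: divide_inverse mult_char_mult[OF assms(1)])
qed

lemma sum_mult_chars_T_sum:
  fixes b :: "'a::{field,finite}"
  assumes "b \<noteq> 0" "k > 0"
  shows "(\<Sum>\<psi> | mult_char \<psi>. \<psi> b * T_sum n a m kk k \<psi>)
           = of_nat (card {x \<in> Pi\<^sub>E {..<n} (\<lambda>_. UNIV - {0}).
                            diag_form n a m x ^ k = b * (\<Prod>i<n. x i ^ kk i)})"
proof -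
  let ?c = "of_nat (card (UNIV :: 'a set)) - 1 :: complex"
  let ?A = "{x \<in> Pi\<^sub>E {..<n} (\<lambda>_. UNIV - {0 :: 'a}). diag_form n a m x \<noteq> 0}"
  define u where "u x = b * (\<Prod>i<n. x i ^ kk i) / diag_form n a m x ^ k" for x
  have A_nonzero: "\<forall>i<n. x i \<noteq> 0" "diag_form n a m x \<noteq> 0" if "x \<in> ?A" for x
    using that by (auto simp: PiE_iff)
  have "finite ?A" by (simp add: finite_PiE)
  have u_nonzero: "u x \<noteq> 0" if "x \<in> ?A" for x
    using A_nonzero[OF that] assms(1) by (simp add: u_def)
  have "\<psi> b * T_sum n a m kk k \<psi> = (\<Sum>x\<in>?A. \<psi> (u x)) / ?c" if "mult_char \<psi>" for \<psi>
  proof -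
    have "\<psi> b * T_sum n a m kk k \<psi>
        = (\<Sum>x\<in>?A. \<psi> b * ((\<Prod>i<n. \<psi> (x i) ^ kk i) * cnj (\<psi> (diag_form n a m x)) ^ k)) / ?c"
      by (simp add: T_sum_def sum_distrib_left sum_divide_distrib)
    also have "\<dots> = (\<Sum>x\<in>?A. \<psi> (u x)) / ?c"
      unfolding u_def
      by (intro arg_cong2[where f = "(/)"] sum.cong refl mult_char_monomial_quotient that assms(1)
          A_nonzero)
    finally show ?thesis .
  qed
  then have "(\<Sum>\<psi> | mult_char \<psi>. \<psi> b * T_sum n a m kk k \<psi>)
      = (\<Sum>\<psi> | mult_char \<psi>. \<Sum>x\<in>?A. \<psi> (u x)) / ?c"
    by (simp add: sum_divide_distrib)
  also have "\<dots> = (\<Sum>x\<in>?A. (\<Sum>\<psi> | mult_char \<psi>. \<psi> (u x)) / ?c)"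
    by (subst sum.swap) (simp add: sum_divide_distrib)
  also have "\<dots> = (\<Sum>x\<in>?A. if u x = 1 then 1 else 0)"
    using card_UNIV_field_ge_2[where 'a='a]
    by (intro sum.cong refl) (simp add: sum_mult_chars u_nonzero)
  also have "\<dots> = (\<Sum>x \<in> {x \<in> ?A. u x = 1}. 1)"
    by (rule sum.inter_filter[OF \<open>finite ?A\<close>, symmetric])
  also have "\<dots> = of_nat (card {x \<in> ?A. u x = 1})"
    by simp
  also have "{x \<in> ?A. u x = 1}
      = {x \<in> Pi\<^sub>E {..<n} (\<lambda>_. UNIV - {0}). diag_form n a m x ^ k = b * (\<Prod>i<n. x i ^ kk i)}"
    using assms by (auto simp: u_def PiE_iff zero_power)
  finally show ?thesis .
qed

lemma T_sum_power_trivial_char: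
  fixes \<psi> :: "'a::{field,finite} \<Rightarrow> complex"
  assumes "mult_char \<psi>" "\<forall>x. x \<noteq> 0 \<longrightarrow> \<psi> x ^ d = 1" "d dvd k" "\<forall>i<n. d dvd kk i"
  shows "T_sum n a m kk k \<psi>
           = of_nat (card {x \<in> Pi\<^sub>E {..<n} (\<lambda>_. UNIV - {0}). diag_form n a m x \<noteq> 0})
             / (of_nat (card (UNIV :: 'a set)) - 1)"
proof -
  have power_dvd: "\<psi> x ^ e = 1" if "x \<noteq> 0" "d dvd e" for x e
    using that assms(2) by (auto simp: dvd_def power_mult)
  have "(\<Prod>i<n. \<psi> (x i) ^ kk i) * cnj (\<psi> (diag_form n a m x)) ^ k = 1"
    if "x \<in> Pi\<^sub>E {..<n} (\<lambda>_. UNIV - {0})" "diag_form n a m x \<noteq> 0" for x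
    using that assms(3,4) by (simp add: power_dvd PiE_iff flip: complex_cnj_power)
  then show ?thesis
    unfolding T_sum_def by simp
qed

lemma sum_power_trivial_chars_T_sum:
  fixes b :: "'a::{field,finite}"
  assumes "d > 0" "d dvd card (UNIV :: 'a set) - 1" "d dvd k" "\<forall>i<n. d dvd kk i"
    and "\<exists>y. b = y ^ d" "b \<noteq> 0"
  shows "(\<Sum>\<psi> | mult_char \<psi> \<and> (\<forall>x. x \<noteq> 0 \<longrightarrow> \<psi> x ^ d = 1). \<psi> b * T_sum n a m kk k \<psi>)
           = of_nat d * (((of_nat (card (UNIV :: 'a set)) - 1) ^ n
               - of_nat (card {x \<in> Pi\<^sub>E {..<n} (\<lambda>_. UNIV - {0}). diag_form n a m x = 0}))
               / (of_nat (card (UNIV :: 'a set)) - 1))"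
proof -
  let ?F = "Pi\<^sub>E {..<n} (\<lambda>_. UNIV - {0 :: 'a})"
  have "card {x \<in> ?F. diag_form n a m x \<noteq> 0} + card {x \<in> ?F. diag_form n a m x = 0} = card ?F"
    by (subst card_Un_disjoint[symmetric]) (auto simp: finite_PiE intro: arg_cong[where f = card])
  also have "card ?F = (card (UNIV :: 'a set) - 1) ^ n"
    by (simp add: card_PiE card_Diff_singleton)
  finally have "(of_nat (card {x \<in> ?F. diag_form n a m x \<noteq> 0}) :: complex)
      = (of_nat (card (UNIV :: 'a set)) - 1) ^ n - of_nat (card {x \<in> ?F. diag_form n a m x = 0})"
    using card_UNIV_field_ge_2[where 'a='a] by (simp add: eq_diff_eq flip: of_nat_add)
  moreover have "\<psi> b * T_sum n a m kk k \<psi>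
      = of_nat (card {x \<in> ?F. diag_form n a m x \<noteq> 0}) / (of_nat (card (UNIV :: 'a set)) - 1)"
    if "mult_char \<psi> \<and> (\<forall>x. x \<noteq> 0 \<longrightarrow> \<psi> x ^ d = 1)" for \<psi>
  proof -
    from that have "mult_char \<psi>" "\<forall>x. x \<noteq> 0 \<longrightarrow> \<psi> x ^ d = 1" by auto
    moreover obtain y where "b = y ^ d" "y \<noteq> 0"
      using assms(1,5,6) by auto
    ultimately have "\<psi> b = 1"
      by (simp add: mult_char_power)
    with \<open>mult_char \<psi>\<close> \<open>\<forall>x. x \<noteq> 0 \<longrightarrow> \<psi> x ^ d = 1\<close> show ?thesis
      by (simp add: T_sum_power_trivial_char assms(3,4))
  qed
  ultimately show ?thesis
    using card_mult_chars_power_trivial[OF assms(1,2)] by simp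
qed

lemma sum_nontrivial_chars_T_sum:
  fixes b :: "'a::{field,finite}"
  assumes "d > 0" "d dvd card (UNIV :: 'a set) - 1" "d dvd k" "\<forall>i<n. d dvd kk i"
    and "\<exists>y. b = y ^ d" "b \<noteq> 0" "k > 0"
  shows "(\<Sum>\<psi> | mult_char \<psi> \<and> \<not> (\<forall>x. x \<noteq> 0 \<longrightarrow> \<psi> x ^ d = 1). \<psi> b * T_sum n a m kk k \<psi>)
           = of_nat (card {x \<in> Pi\<^sub>E {..<n} (\<lambda>_. UNIV - {0}).
                            diag_form n a m x ^ k = b * (\<Prod>i<n. x i ^ kk i)})
             - of_nat d * (((of_nat (card (UNIV :: 'a set)) - 1) ^ n
               - of_nat (card {x \<in> Pi\<^sub>E {..<n} (\<lambda>_. UNIV - {0}). diag_form n a m x = 0}))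
               / (of_nat (card (UNIV :: 'a set)) - 1))"
proof -
  let ?trivial = "{\<psi> :: 'a \<Rightarrow> complex. mult_char \<psi> \<and> (\<forall>x. x \<noteq> 0 \<longrightarrow> \<psi> x ^ d = 1)}"
  have "(\<Sum>\<psi> | mult_char \<psi> \<and> \<not> (\<forall>x. x \<noteq> 0 \<longrightarrow> \<psi> x ^ d = 1). \<psi> b * T_sum n a m kk k \<psi>)
      = (\<Sum>\<psi> \<in> {\<psi>. mult_char \<psi>} - ?trivial. \<psi> b * T_sum n a m kk k \<psi>)"
    by (rule sum.cong) auto
  also have "\<dots> = (\<Sum>\<psi> | mult_char \<psi>. \<psi> b * T_sum n a m kk k \<psi>)
      - (\<Sum>\<psi> \<in> ?trivial. \<psi> b * T_sum n a m kk k \<psi>)"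
    by (rule sum_diff[OF finite_mult_chars]) blast
  finally show ?thesis
    by (simp only: sum_mult_chars_T_sum[OF assms(6,7)] sum_power_trivial_chars_T_sum[OF assms(1-6)])
qed

theorem lemma1:
  fixes n k :: nat and m kk :: "nat \<Rightarrow> nat" and b :: "'a::{field,finite}"
    and a :: "nat \<Rightarrow> 'a"
  assumes "n \<ge> 2"
    and "\<forall>i<n. a i \<noteq> 0" and "b \<noteq> 0"
    and "k > 0" and "\<forall>i<n. kk i > 0" and "\<forall>i<n. m i > 0"
  defines "q \<equiv> card (UNIV :: 'a set)"
  defines "N \<equiv> card {x \<in> Pi\<^sub>E {..<n} (\<lambda>_. UNIV).
                 diag_form n a m x ^ k = b * (\<Prod>i<n. x i ^ kk i)}"
  defines "N0 \<equiv> card {x \<in> Pi\<^sub>E {..<n} (\<lambda>_. UNIV). diag_form n a m x = 0}"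
  defines "N0s \<equiv> card {x \<in> Pi\<^sub>E {..<n} (\<lambda>_. UNIV - {0}). diag_form n a m x = 0}"
  defines "k0 \<equiv> Gcd (insert k (insert (q - 1) (kk ` {..<n})))"
  shows "(\<not> (\<exists>y. b = y ^ k0) \<longrightarrow> int N = int N0 - int N0s) \<and>
         ((\<exists>y. b = y ^ k0) \<longrightarrow>
            (of_nat N :: complex) =
              of_nat k0 * (of_nat q - 1) ^ (n - 1) + of_nat N0
              - (of_nat k0 + of_nat q - 1) / (of_nat q - 1) * of_nat N0s
              + (\<Sum>\<psi> \<in> {\<psi>. mult_char \<psi> \<and> \<not> (\<forall>x. x \<noteq> 0 \<longrightarrow> \<psi> x ^ k0 = 1)}.
                   \<psi> b * T_sum n a m kk k \<psi>))"
proof -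
  let ?St = "{x \<in> Pi\<^sub>E {..<n} (\<lambda>_. UNIV - {0}). diag_form n a m x ^ k = b * (\<Prod>i<n. x i ^ kk i)}"
  have k0_dvd: "k0 dvd card (UNIV :: 'a set) - 1" "k0 dvd k" "\<forall>i<n. k0 dvd kk i"
    unfolding k0_def q_def by (auto intro!: Gcd_dvd simp del: Gcd_insert)
  have "k0 > 0"
    unfolding k0_def using assms(4) by simp
  have N_split: "int N = int N0 - int N0s + int (card ?St)"
    unfolding N_def N0_def N0s_def by (rule card_solutions_split[OF assms(4,5)])
  show ?thesis
  proof (intro conjI impI)
    assume "\<nexists>y. b = y ^ k0"
    then show "int N = int N0 - int N0s"
      using N_split unfolding nonzero_solutions_eq_empty[OF k0_dvd(2,3) \<open>\<nexists>y. b = y ^ k0\<close>]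
      by simp
  next
    assume "\<exists>y. b = y ^ k0"
    define c where "c = (of_nat q - 1 :: complex)"
    have "c \<noteq> 0"
      using card_UNIV_field_ge_2[where 'a='a] unfolding c_def q_def by simp
    have "c ^ n = c * c ^ (n - 1)" and "of_nat k0 + of_nat q - 1 = of_nat k0 + c"
      using assms(1) unfolding c_def by (cases n) simp_all
    moreover have "(of_nat N :: complex) = of_nat N0 - of_nat N0s + of_nat (card ?St)"
      using arg_cong[OF N_split, of "of_int :: int \<Rightarrow> complex"] by simp
    ultimately show "(of_nat N :: complex) =
        of_nat k0 * (of_nat q - 1) ^ (n - 1) + of_nat N0
        - (of_nat k0 + of_nat q - 1) / (of_nat q - 1) * of_nat N0s
        + (\<Sum>\<psi> \<in> {\<psi>. mult_char \<psi> \<and> \<not> (\<forall>x. x \<noteq> 0 \<longrightarrow> \<psi> x ^ k0 = 1)}. \<psi> b * T_sum n a m kk k \<psi>)"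
      unfolding sum_nontrivial_chars_T_sum[OF \<open>k0 > 0\<close> k0_dvd \<open>\<exists>y. b = y ^ k0\<close> assms(3,4)]
        N0s_def[symmetric] q_def[symmetric] c_def[symmetric]
      using \<open>c \<noteq> 0\<close> by (simp add: diff_divide_distrib add_divide_distrib algebra_simps)
  qed
qed

end
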